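(* Fix $\theta\in(0,1)$. For positive integers $m,n$, let $\bm{D}_0\in\mathbb{R}^{m\times m}$ have i.i.d. $\mathcal{N}(0,1/m)$ entries, let $\bm{X}_0\in\mathbb{R}^{m\times n}$ have i.i.d. $BG(\theta)$ entries, and let $\Omega$ be the support of $\bm{X}_0$ and $\Omega_i\subseteq[n]$ the support of its $i$-th row, $\Omega_i^c=[n]\setminus\Omega_i$. Consider the conditions: (C1) $n\ge m+\frac{|\Omega|}{m}-1$; (C2) for all $i\in[m]$, $|\Omega_i^c|\ge m-1$; (C3) for all $i\in[m]$ and all $i'\ne i$ in $[m]$, there exists $j\in[n]$ with $(\bm{X}_0)_{i,j}=0$ and $(\bm{X}_0)_{i',j}\ne0$. Let $m,n\to\infty$ with $n/m\to\bar{n}\in(0,\infty)$. If $\bar{n}>\frac{1}{1-\theta}$, then the probability that all three conditions (C1), (C2), (C3) hold tends to $1$.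
   Context: $[n]=\{1,\dots,n\}$. A random variable $X$ is Bernoulli–Gaussian, $X\sim BG(\theta)$, if $X=W\cdot C$ with $W$ and $C$ independent, $W$ Bernoulli with $\Pr(W=1)=\theta$, and $C\sim\mathcal{N}(0,1)$. The support of a matrix or row vector is the set of indices of its nonzero entries. *)

theory Defs
  imports "HOL-Probability.Probability"
begin

definition BG :: "real \<Rightarrow> real measure" where
  "BG \<theta> = distr (measure_pmf (bernoulli_pmf \<theta>) \<Otimes>\<^sub>M density lborel std_normal_density) borel
             (\<lambda>(w, c). (if w then 1 else 0) * c)"

text \<open>Random matrix with i.i.d. entries of law \<mu>, indexed by [m] x [n] (1-based).\<close>
definition iid_matrix :: "nat \<Rightarrow> nat \<Rightarrow> real measure \<Rightarrow> (nat \<times> nat \<Rightarrow> real) measure" where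
  "iid_matrix m n \<mu> = PiM ({1..m} \<times> {1..n}) (\<lambda>_. \<mu>)"

text \<open>Joint law of (D0, X0): D0 in R^{m x m} with i.i.d. N(0,1/m) entries
  (standard deviation 1/sqrt m), X0 in R^{m x n} with i.i.d. BG(theta) entries, independent.\<close>
definition model :: "real \<Rightarrow> nat \<Rightarrow> nat \<Rightarrow> ((nat \<times> nat \<Rightarrow> real) \<times> (nat \<times> nat \<Rightarrow> real)) measure" where
  "model \<theta> m n = iid_matrix m m (density lborel (normal_density 0 (1 / sqrt (real m))))
                   \<Otimes>\<^sub>M iid_matrix m n (BG \<theta>)"

definition supp :: "nat \<Rightarrow> nat \<Rightarrow> (nat \<times> nat \<Rightarrow> real) \<Rightarrow> (nat \<times> nat) set" where
  "supp m n X = {(i, j) \<in> {1..m} \<times> {1..n}. X (i, j) \<noteq> 0}"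

definition row_supp :: "nat \<Rightarrow> (nat \<times> nat \<Rightarrow> real) \<Rightarrow> nat \<Rightarrow> nat set" where
  "row_supp n X i = {j \<in> {1..n}. X (i, j) \<noteq> 0}"

definition C1 :: "nat \<Rightarrow> nat \<Rightarrow> (nat \<times> nat \<Rightarrow> real) \<Rightarrow> bool" where
  "C1 m n X \<longleftrightarrow> real n \<ge> real m + real (card (supp m n X)) / real m - 1"

definition C2 :: "nat \<Rightarrow> nat \<Rightarrow> (nat \<times> nat \<Rightarrow> real) \<Rightarrow> bool" where
  "C2 m n X \<longleftrightarrow> (\<forall>i\<in>{1..m}. real (card ({1..n} - row_supp n X i)) \<ge> real m - 1)"

definition C3 :: "nat \<Rightarrow> nat \<Rightarrow> (nat \<times> nat \<Rightarrow> real) \<Rightarrow> bool" where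
  "C3 m n X \<longleftrightarrow> (\<forall>i\<in>{1..m}. \<forall>i'\<in>{1..m}. i' \<noteq> i \<longrightarrow>
                     (\<exists>j\<in>{1..n}. X (i, j) = 0 \<and> X (i', j) \<noteq> 0))"

end

theory Submission
  imports Defs "HOL-Real_Asymp.Real_Asymp"
begin

text \<open>
  Conditions (C1)-(C3) ignore D0 and depend only on the zero pattern of X0, whose entries are
  independent Bernoulli(\<theta>) indicators; moreover (C2) implies (C1) by summing the row bounds.
  (C2) fails only if some row has at least n - m + 2 nonzeros, which for m \<le> (1 - \<theta> - \<delta>) n
  exceeds the mean n\<theta> by \<delta>n. (C3) fails for rows i \<noteq> i' only if no column j has
  X(i,j) = 0 \<noteq> X(i',j), i.e. a count of mean n\<theta>(1 - \<theta>) vanishes. Hoeffding's inequality and a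
  union bound over m rows and m^2 pairs bound the failure probability by
  n exp(-2\<delta>^2 n) + n^2 exp(-2\<theta>^2(1 - \<theta>)^2 n), which tends to 0 once n/m tends to a limit
  above 1/(1 - \<theta>).
\<close>

lemma sets_BG [measurable_cong]: "sets (BG \<theta>) = sets borel"
  by (simp add: BG_def)

lemma BG_product_measurable:
  "(\<lambda>(w, c). (if w then 1 else 0) * c :: real)
     \<in> borel_measurable (measure_pmf (bernoulli_pmf \<theta>) \<Otimes>\<^sub>M density lborel std_normal_density)"
  unfolding case_prod_beta' by measurable

lemma prob_space_BG: "prob_space (BG \<theta>)"
  unfolding BG_def
  by (intro prob_space.prob_space_distr prob_space_pair prob_space_measure_pmf
      prob_space_normal_density BG_product_measurable) simp

lemma measure_BG_nonzero:
  assumes "0 \<le> \<theta>" "\<theta> \<le> 1"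
  shows "measure (BG \<theta>) (UNIV - {0}) = \<theta>"
proof -
  let ?G = "density lborel std_normal_density"
  interpret G: prob_space ?G
    by (rule prob_space_normal_density) simp
  have preimage: "(\<lambda>(w, c). (if w then 1 else 0) * c) -` (UNIV - {0::real})
      \<inter> space (measure_pmf (bernoulli_pmf \<theta>) \<Otimes>\<^sub>M ?G) = {True} \<times> (UNIV - {0})"
    by (auto simp: space_pair_measure split: if_splits)
  have "emeasure ?G {0} = 0"
    by (subst emeasure_density) (auto intro!: nn_integral_null_set)
  then have "emeasure ?G (UNIV - {0}) = 1"
    using G.emeasure_space_1 by (subst emeasure_Diff) auto
  then have "emeasure (BG \<theta>) (UNIV - {0}) = ennreal \<theta>"
    unfolding BG_def using assms
    by (simp add: emeasure_distr BG_product_measurable preimage G.emeasure_pair_measure_Times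
        emeasure_pmf_single)
  then show ?thesis
    using assms by (simp add: measure_def)
qed

lemma product_prob_space_const: "prob_space N \<Longrightarrow> product_prob_space (\<lambda>_. N)"
  by (simp add: product_prob_space_def product_prob_space_axioms_def product_sigma_finite_def
      prob_space_imp_sigma_finite)

lemma indep_vars_PiM_coordinates:
  assumes N: "prob_space N" and "I \<noteq> {}"
  shows "prob_space.indep_vars (PiM I (\<lambda>_. N)) (\<lambda>_. N) (\<lambda>i X. X i) I"
proof -
  interpret product_prob_space "\<lambda>_. N" I
    using N by (rule product_prob_space_const)
  have "distr (PiM I (\<lambda>_. N)) (PiM I (\<lambda>_. N)) (\<lambda>X. \<lambda>i\<in>I. X i)
      = distr (PiM I (\<lambda>_. N)) (PiM I (\<lambda>_. N)) (\<lambda>X. X)"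
    by (rule distr_cong) (auto simp: space_PiM PiE_def extensional_restrict)
  moreover have "(\<Pi>\<^sub>M i\<in>I. distr (PiM I (\<lambda>_. N)) N (\<lambda>X. X i)) = PiM I (\<lambda>_. N)"
    by (rule PiM_cong) (auto intro!: distr_PiM_component N)
  ultimately show ?thesis
    by (subst P.indep_vars_iff_distr_eq_PiM'[OF \<open>I \<noteq> {}\<close>]) auto
qed

lemma indep_vars_PiM_blocks:
  assumes N: "prob_space N" and "I \<noteq> {}"
    and "\<And>j. j \<in> J \<Longrightarrow> K j \<subseteq> I" and "disjoint_family_on K J"
    and "\<And>j. j \<in> J \<Longrightarrow> f j \<in> borel_measurable (PiM (K j) (\<lambda>_. N))"
  shows "prob_space.indep_vars (PiM I (\<lambda>_. N)) (\<lambda>_. borel) (\<lambda>j X. f j (restrict X (K j))) J"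
proof -
  interpret P: prob_space "PiM I (\<lambda>_. N)"
    by (intro prob_space_PiM N)
  have "P.indep_vars (\<lambda>j. PiM (K j) (\<lambda>_. N)) (\<lambda>j X. restrict (\<lambda>i. X i) (K j)) J"
    using indep_vars_PiM_coordinates[OF assms(1,2)] assms(3,4) by (rule P.indep_vars_restrict)
  from P.indep_vars_compose2[OF this assms(5)] show ?thesis
    by simp
qed

lemma measure_PiM_coordinates_in:
  assumes N: "prob_space N" and "K \<subseteq> I" "finite K" "\<And>k. k \<in> K \<Longrightarrow> A k \<in> sets N"
  shows "measure (PiM I (\<lambda>_. N)) {X \<in> space (PiM I (\<lambda>_. N)). \<forall>k\<in>K. X k \<in> A k}
           = (\<Prod>k\<in>K. measure N (A k))"
proof -
  interpret product_prob_space "\<lambda>_. N" I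
    using N by (rule product_prob_space_const)
  have emb: "{X \<in> space (PiM I (\<lambda>_. N)). \<forall>k\<in>K. X k \<in> A k} = prod_emb I (\<lambda>_. N) K (PiE K A)"
    using assms(2) by (auto simp: prod_emb_def space_PiM restrict_PiE_iff)
  have "emeasure (PiM I (\<lambda>_. N)) (prod_emb I (\<lambda>_. N) K (PiE K A)) = (\<Prod>k\<in>K. emeasure N (A k))"
    using assms(2-4) by (intro emeasure_PiM_emb) auto
  also have "\<dots> = ennreal (\<Prod>k\<in>K. measure N (A k))"
    by (simp add: M.emeasure_eq_measure prod_ennreal)
  finally show ?thesis
    unfolding emb by (simp add: measure_def[of "PiM I (\<lambda>_. N)"] prod_nonneg)
qed

lemma expectation_PiM_coordinates_in:
  assumes N: "prob_space N" and "K \<subseteq> I" "finite K" "\<And>k. k \<in> K \<Longrightarrow> A k \<in> sets N"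
  shows "(\<integral>X. of_bool (\<forall>k\<in>K. X k \<in> A k) \<partial>PiM I (\<lambda>_. N)) = (\<Prod>k\<in>K. measure N (A k))"
proof -
  interpret P: prob_space "PiM I (\<lambda>_. N)"
    by (intro prob_space_PiM N)
  let ?S = "{X \<in> space (PiM I (\<lambda>_. N)). \<forall>k\<in>K. X k \<in> A k}"
  have "(\<integral>X. of_bool (\<forall>k\<in>K. X k \<in> A k) \<partial>PiM I (\<lambda>_. N))
      = (\<integral>X. indicator ?S X \<partial>PiM I (\<lambda>_. N))"
    by (intro Bochner_Integration.integral_cong) (auto simp: indicator_def)
  also have "\<dots> = measure (PiM I (\<lambda>_. N)) (?S \<inter> space (PiM I (\<lambda>_. N)))"
    by (rule Bochner_Integration.integral_indicator)
  also have "?S \<inter> space (PiM I (\<lambda>_. N)) = ?S"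
    by blast
  finally show ?thesis
    using measure_PiM_coordinates_in[of N K I A] assms by simp
qed

lemma measurable_PiM_component_borel:
  assumes "i \<in> I" "sets (M i) = sets borel"
  shows "(\<lambda>X. X i) \<in> borel_measurable (PiM I M)"
  using measurable_component_singleton[OF assms(1), of M]
  by (simp add: measurable_cong_sets[OF refl assms(2)])

lemma sets_PiM_zero_pattern_invariant:
  fixes M :: "'i \<Rightarrow> real measure"
  assumes "finite I" and sets_M: "\<And>i. i \<in> I \<Longrightarrow> sets (M i) = sets borel"
    and invariant: "\<And>X Y. X \<in> space (PiM I M) \<Longrightarrow> Y \<in> space (PiM I M) \<Longrightarrow>
           \<forall>i\<in>I. (X i = 0) = (Y i = 0) \<Longrightarrow> P X \<Longrightarrow> P Y"
  shows "{X \<in> space (PiM I M). P X} \<in> sets (PiM I M)"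
proof -
  define pattern where "pattern X = (\<lambda>i\<in>I. X i = 0)" for X :: "'i \<Rightarrow> real"
  define F where "F = pattern ` {X \<in> space (PiM I M). P X}"
  have "F \<subseteq> PiE I (\<lambda>_. UNIV)"
    by (auto simp: F_def pattern_def)
  then have "finite F"
    by (rule finite_subset) (simp add: \<open>finite I\<close> finite_PiE)
  have "{X \<in> space (PiM I M). P X} = {X \<in> space (PiM I M). \<exists>f\<in>F. \<forall>i\<in>I. (X i = 0) = f i}"
  proof safe
    fix X assume "X \<in> space (PiM I M)" "P X"
    then show "\<exists>f\<in>F. \<forall>i\<in>I. (X i = 0) = f i"
      by (auto simp: F_def pattern_def)
  next
    fix X f assume "X \<in> space (PiM I M)" "f \<in> F" "\<forall>i\<in>I. (X i = 0) = f i"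
    then show "P X"
      by (auto simp: F_def pattern_def intro: invariant)
  qed
  also have "\<dots> \<in> sets (PiM I M)"
  proof (intro sets.sets_Collect_finite_Ex sets.sets_Collect_finite_All \<open>finite F\<close> \<open>finite I\<close>)
    fix i b assume "i \<in> I"
    then have "(\<lambda>X. X i) \<in> borel_measurable (PiM I M)"
      using sets_M[OF \<open>i \<in> I\<close>] by (rule measurable_PiM_component_borel)
    then show "{X \<in> space (PiM I M). (X i = 0) = b i} \<in> sets (PiM I M)"
      by measurable
  qed
  finally show ?thesis .
qed

lemma (in prob_space) Hoeffding_ineq_unit_interval:
  assumes "finite J" "J \<noteq> {}" "indep_vars (\<lambda>_. borel) Y J"
    and "\<And>j x. j \<in> J \<Longrightarrow> x \<in> space M \<Longrightarrow> Y j x \<in> {0..1}" and "0 \<le> \<epsilon>"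
  shows "prob {x \<in> space M. (\<Sum>j\<in>J. expectation (Y j)) + \<epsilon> \<le> (\<Sum>j\<in>J. Y j x)}
           \<le> exp (-2 * \<epsilon>\<^sup>2 / card J)"
    and "prob {x \<in> space M. (\<Sum>j\<in>J. Y j x) \<le> (\<Sum>j\<in>J. expectation (Y j)) - \<epsilon>}
           \<le> exp (-2 * \<epsilon>\<^sup>2 / card J)"
proof -
  interpret H: Hoeffding_ineq M J Y "\<lambda>_. 0" "\<lambda>_. 1" "\<Sum>j\<in>J. expectation (Y j)"
    by unfold_locales (use assms in \<open>auto intro!: AE_I2\<close>)
  have "(\<Sum>j\<in>J. ((\<lambda>_. 1::real) j - (\<lambda>_. 0) j)\<^sup>2) > 0"
    using assms(1,2) by (simp add: card_gt_0_iff)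
  then show "prob {x \<in> space M. (\<Sum>j\<in>J. expectation (Y j)) + \<epsilon> \<le> (\<Sum>j\<in>J. Y j x)}
           \<le> exp (-2 * \<epsilon>\<^sup>2 / card J)"
    and "prob {x \<in> space M. (\<Sum>j\<in>J. Y j x) \<le> (\<Sum>j\<in>J. expectation (Y j)) - \<epsilon>}
           \<le> exp (-2 * \<epsilon>\<^sup>2 / card J)"
    using H.Hoeffding_ineq_ge[OF \<open>0 \<le> \<epsilon>\<close>] H.Hoeffding_ineq_le[OF \<open>0 \<le> \<epsilon>\<close>] by simp_all
qed

lemma supp_eq_Sigma_row_supp: "supp m n X = Sigma {1..m} (row_supp n X)"
  by (auto simp: supp_def row_supp_def)

lemma row_supp_subset: "row_supp n X i \<subseteq> {1..n}"
  by (auto simp: row_supp_def)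

lemma card_row_supp_eq_sum: "real (card (row_supp n X i)) = (\<Sum>j=1..n. of_bool (X (i, j) \<noteq> 0))"
proof -
  have "row_supp n X i = {1..n} \<inter> {j. X (i, j) \<noteq> 0}"
    by (auto simp: row_supp_def)
  then show ?thesis
    by (simp add: of_bool_def sum.If_cases)
qed

lemma C2_iff_card_row_supp:
  "C2 m n X \<longleftrightarrow> (\<forall>i\<in>{1..m}. real (card (row_supp n X i)) \<le> real n - real m + 1)"
proof -
  have "real (card ({1..n} - row_supp n X i)) = real n - real (card (row_supp n X i))" for i
    using row_supp_subset[of n X i] card_mono[OF _ row_supp_subset[of n X i]]
    by (simp add: card_Diff_subset finite_subset of_nat_diff)
  then show ?thesis
    unfolding C2_def by (auto intro!: ball_cong)
qed

lemma C3_iff_row_supp: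
  "C3 m n X \<longleftrightarrow> (\<forall>i\<in>{1..m}. \<forall>i'\<in>{1..m}. i' \<noteq> i \<longrightarrow> \<not> row_supp n X i' \<subseteq> row_supp n X i)"
  unfolding C3_def row_supp_def by blast

lemma C2_imp_C1:
  assumes "0 < m" "C2 m n X"
  shows "C1 m n X"
proof -
  have "real (card (supp m n X)) = (\<Sum>i=1..m. real (card (row_supp n X i)))"
    unfolding supp_eq_Sigma_row_supp
    by (simp add: card_SigmaI finite_subset[OF row_supp_subset])
  also have "\<dots> \<le> (\<Sum>i=1..m. real n - real m + 1)"
    using assms(2) by (intro sum_mono) (simp add: C2_iff_card_row_supp)
  also have "\<dots> = real m * (real n - real m + 1)"
    by simp
  finally show ?thesis
    using assms(1) by (simp add: C1_def field_simps)
qed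

lemma C1_C2_C3_row_supp_cong:
  assumes "\<And>i. i \<in> {1..m} \<Longrightarrow> row_supp n X i = row_supp n Y i"
  shows "C1 m n X \<and> C2 m n X \<and> C3 m n X \<longleftrightarrow> C1 m n Y \<and> C2 m n Y \<and> C3 m n Y"
proof -
  have "supp m n X = supp m n Y"
    unfolding supp_eq_Sigma_row_supp using assms by (intro Sigma_cong) auto
  with assms show ?thesis
    by (simp add: C1_def C2_iff_card_row_supp C3_iff_row_supp)
qed

lemma C1_C2_C3_failure_cases:
  assumes "0 < m" "\<not> (C1 m n X \<and> C2 m n X \<and> C3 m n X)"
  obtains i where "i \<in> {1..m}" "real n - real m + 1 < real (card (row_supp n X i))"
  | i i' where "i \<in> {1..m}" "i' \<in> {1..m}" "i \<noteq> i'" "row_supp n X i' \<subseteq> row_supp n X i"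
proof (cases "C2 m n X")
  case False
  then show ?thesis
    using that(1) by (auto simp: C2_iff_card_row_supp not_le)
next
  case True
  with assms have "\<not> C3 m n X"
    using C2_imp_C1 by blast
  then show ?thesis
    using that(2) by (auto simp: C3_iff_row_supp)
qed

lemma prob_space_iid_matrix: "prob_space N \<Longrightarrow> prob_space (iid_matrix m n N)"
  unfolding iid_matrix_def by (rule prob_space_PiM)

lemma sets_iid_matrix_row_supp_invariant:
  assumes "sets N = sets borel"
    and "\<And>X Y. (\<And>i. i \<in> {1..m} \<Longrightarrow> row_supp n X i = row_supp n Y i) \<Longrightarrow> P X \<Longrightarrow> P Y"
  shows "{X \<in> space (iid_matrix m n N). P X} \<in> sets (iid_matrix m n N)"
  unfolding iid_matrix_def
proof (rule sets_PiM_zero_pattern_invariant)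
  fix X Y :: "nat \<times> nat \<Rightarrow> real"
  assume "\<forall>k\<in>{1..m} \<times> {1..n}. (X k = 0) = (Y k = 0)" "P X"
  then show "P Y"
    by (intro assms(2)[of X Y]) (auto simp: row_supp_def)
qed (simp_all add: assms(1))

lemma sets_iid_matrix_C1_C2_C3:
  "sets N = sets borel \<Longrightarrow>
     {X \<in> space (iid_matrix m n N). C1 m n X \<and> C2 m n X \<and> C3 m n X} \<in> sets (iid_matrix m n N)"
  by (rule sets_iid_matrix_row_supp_invariant) (assumption, metis C1_C2_C3_row_supp_cong)

lemma prob_row_supp_large:
  assumes N: "prob_space N" "sets N = sets borel" and p: "measure N (UNIV - {0}) = p"
    and i: "i \<in> {1..m}" and "0 < n" "0 \<le> \<epsilon>"
  shows "measure (iid_matrix m n N) {X \<in> space (iid_matrix m n N).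
           real n * p + \<epsilon> \<le> real (card (row_supp n X i))}
         \<le> exp (-2 * \<epsilon>\<^sup>2 / real n)"
proof -
  interpret P: prob_space "iid_matrix m n N"
    using N(1) by (rule prob_space_iid_matrix)
  let ?Y = "\<lambda>j X. of_bool (X (i, j) \<noteq> 0) :: real"
  have "?Y j \<in> borel_measurable (PiM {(i, j)} (\<lambda>_. N))" for j
  proof -
    have "(\<lambda>X. X (i, j)) \<in> borel_measurable (PiM {(i, j)} (\<lambda>_. N))"
      using N(2) by (intro measurable_PiM_component_borel) auto
    then show ?thesis
      by measurable
  qed
  then have "P.indep_vars (\<lambda>_. borel) (\<lambda>j X. ?Y j (restrict X {(i, j)})) {1..n}"
    unfolding iid_matrix_def using N(1) i \<open>0 < n\<close>
    by (intro indep_vars_PiM_blocks) (auto simp: disjoint_family_on_def)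
  then have "P.indep_vars (\<lambda>_. borel) ?Y {1..n}"
    by simp
  moreover have "P.expectation (?Y j) = p" if "j \<in> {1..n}" for j
    using expectation_PiM_coordinates_in[of N "{(i, j)}" "{1..m} \<times> {1..n}" "\<lambda>_. UNIV - {0}"]
      N p i that by (simp add: iid_matrix_def)
  ultimately have "P.prob {X \<in> space (iid_matrix m n N).
      real n * p + \<epsilon> \<le> (\<Sum>j=1..n. ?Y j X)} \<le> exp (-2 * \<epsilon>\<^sup>2 / real n)"
    using P.Hoeffding_ineq_unit_interval(1)[of "{1..n}" ?Y \<epsilon>] \<open>0 < n\<close> \<open>0 \<le> \<epsilon>\<close> by simp
  then show ?thesis
    by (simp add: card_row_supp_eq_sum)
qed

lemma prob_row_supp_nested:
  assumes N: "prob_space N" "sets N = sets borel" and p: "measure N (UNIV - {0}) = p"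
    and ii': "i \<in> {1..m}" "i' \<in> {1..m}" "i \<noteq> i'" and "0 < n"
  shows "measure (iid_matrix m n N) {X \<in> space (iid_matrix m n N). row_supp n X i' \<subseteq> row_supp n X i}
         \<le> exp (-2 * (p * (1 - p))\<^sup>2 * real n)"
proof -
  interpret N: prob_space N
    by (rule N(1))
  interpret P: prob_space "iid_matrix m n N"
    using N(1) by (rule prob_space_iid_matrix)
  let ?Y = "\<lambda>j X. of_bool (X (i, j) = 0 \<and> X (i', j) \<noteq> 0) :: real"
  have "?Y j \<in> borel_measurable (PiM {(i, j), (i', j)} (\<lambda>_. N))" for j
  proof -
    have "(\<lambda>X. X (i, j)) \<in> borel_measurable (PiM {(i, j), (i', j)} (\<lambda>_. N))"
      and "(\<lambda>X. X (i', j)) \<in> borel_measurable (PiM {(i, j), (i', j)} (\<lambda>_. N))"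
      using N(2) by (auto intro!: measurable_PiM_component_borel)
    then show ?thesis
      by measurable
  qed
  then have "P.indep_vars (\<lambda>_. borel) (\<lambda>j X. ?Y j (restrict X {(i, j), (i', j)})) {1..n}"
    unfolding iid_matrix_def using N(1) ii' \<open>0 < n\<close>
    by (intro indep_vars_PiM_blocks) (auto simp: disjoint_family_on_def)
  then have indep: "P.indep_vars (\<lambda>_. borel) ?Y {1..n}"
    by simp
  have "measure N {0} = 1 - p"
    using N.prob_compl[of "UNIV - {0}"] N(2) p
    by (simp add: sets_eq_imp_space_eq[OF N(2)] Diff_Diff_Int)
  then have "P.expectation (?Y j) = (1 - p) * p" if "j \<in> {1..n}" for j
  proof -
    let ?A = "\<lambda>k. if k = (i, j) then {0} else UNIV - {0::real}"
    have "P.expectation (\<lambda>X. of_bool (\<forall>k\<in>{(i, j), (i', j)}. X k \<in> ?A k))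
        = (\<Prod>k\<in>{(i, j), (i', j)}. measure N (?A k))"
      unfolding iid_matrix_def using ii' that
      by (intro expectation_PiM_coordinates_in N(1)) (auto simp: N(2))
    then show ?thesis
      using ii' \<open>measure N {0} = 1 - p\<close> p by simp
  qed
  then have expectation: "(\<Sum>j=1..n. P.expectation (?Y j)) = n * ((1 - p) * p)"
    by simp
  have "0 \<le> p" "p \<le> 1"
    using p measure_nonneg[of N] N.prob_le_1 by auto
  then have "P.prob {X \<in> space (iid_matrix m n N).
      (\<Sum>j=1..n. ?Y j X) \<le> (\<Sum>j=1..n. P.expectation (?Y j)) - n * ((1 - p) * p)}
      \<le> exp (-2 * (n * ((1 - p) * p))\<^sup>2 / card {1..n})"
    using \<open>0 < n\<close> by (intro P.Hoeffding_ineq_unit_interval(2)[OF _ _ indep]) auto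
  moreover have "(\<Sum>j=1..n. ?Y j X) \<le> 0 \<longleftrightarrow> row_supp n X i' \<subseteq> row_supp n X i" for X
    using sum_nonneg_eq_0_iff[of "{1..n}" "\<lambda>j. ?Y j X"] sum_nonneg[of "{1..n}" "\<lambda>j. ?Y j X"]
    by (auto simp: row_supp_def)
  moreover have "-2 * (n * ((1 - p) * p))\<^sup>2 / card {1..n} = -2 * (p * (1 - p))\<^sup>2 * n"
    using \<open>0 < n\<close> by (simp add: power2_eq_square)
  ultimately show ?thesis
    unfolding expectation by simp
qed

lemma prob_C1_C2_C3_failure_le:
  assumes N: "prob_space N" "sets N = sets borel" and p: "measure N (UNIV - {0}) = p"
    and "0 < m" "0 < n" "0 \<le> \<epsilon>" and room: "real n * p + \<epsilon> \<le> real n - real m + 1"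
  shows "1 - measure (iid_matrix m n N) {X \<in> space (iid_matrix m n N). C1 m n X \<and> C2 m n X \<and> C3 m n X}
         \<le> real m * exp (-2 * \<epsilon>\<^sup>2 / real n) + real m ^ 2 * exp (-2 * (p * (1 - p))\<^sup>2 * real n)"
proof -
  let ?P = "iid_matrix m n N"
  interpret P: prob_space ?P
    using N(1) by (rule prob_space_iid_matrix)
  define Good where "Good = {X \<in> space ?P. C1 m n X \<and> C2 m n X \<and> C3 m n X}"
  define Dense where "Dense i = {X \<in> space ?P. real n * p + \<epsilon> \<le> real (card (row_supp n X i))}" for i
  define Nested where "Nested ii' = {X \<in> space ?P. row_supp n X (snd ii') \<subseteq> row_supp n X (fst ii')}"
    for ii' :: "nat \<times> nat"
  define Pairs where "Pairs = {ii' \<in> {1..m} \<times> {1..m}. fst ii' \<noteq> snd ii'}"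
  have sets_Good: "Good \<in> P.events"
    unfolding Good_def using N(2) by (rule sets_iid_matrix_C1_C2_C3)
  have sets_Dense: "Dense i \<in> P.events" if "i \<in> {1..m}" for i
    unfolding Dense_def by (rule sets_iid_matrix_row_supp_invariant[OF N(2)]) (metis that)
  have sets_Nested: "Nested ii' \<in> P.events" if "ii' \<in> Pairs" for ii'
    unfolding Nested_def using that
    by (intro sets_iid_matrix_row_supp_invariant[OF N(2)]) (auto simp: Pairs_def)
  have "space ?P - Good \<subseteq> (\<Union>i\<in>{1..m}. Dense i) \<union> (\<Union>ii'\<in>Pairs. Nested ii')"
  proof
    fix X assume X: "X \<in> space ?P - Good"
    then have "\<not> (C1 m n X \<and> C2 m n X \<and> C3 m n X)"
      by (simp add: Good_def)
    with \<open>0 < m\<close> show "X \<in> (\<Union>i\<in>{1..m}. Dense i) \<union> (\<Union>ii'\<in>Pairs. Nested ii')"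
    proof (cases rule: C1_C2_C3_failure_cases)
      case (1 i)
      then have "X \<in> Dense i"
        using X room by (simp add: Dense_def)
      with \<open>i \<in> {1..m}\<close> show ?thesis
        by blast
    next
      case (2 i i')
      then have "(i, i') \<in> Pairs" "X \<in> Nested (i, i')"
        using X by (auto simp: Pairs_def Nested_def)
      then show ?thesis
        by blast
    qed
  qed
  moreover have "finite Pairs"
    unfolding Pairs_def by (rule finite_subset[of _ "{1..m} \<times> {1..m}"]) auto
  moreover have "(\<Union>i\<in>{1..m}. Dense i) \<union> (\<Union>ii'\<in>Pairs. Nested ii') \<in> P.events"
    using sets_Dense sets_Nested \<open>finite Pairs\<close> by (intro sets.Un sets.finite_UN) auto
  ultimately have "1 - P.prob Good \<le> P.prob ((\<Union>i\<in>{1..m}. Dense i) \<union> (\<Union>ii'\<in>Pairs. Nested ii'))"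
    using sets_Good by (subst P.prob_compl[symmetric]) (auto intro!: P.finite_measure_mono)
  also have "\<dots> \<le> (\<Sum>i=1..m. P.prob (Dense i)) + (\<Sum>ii'\<in>Pairs. P.prob (Nested ii'))"
    using sets_Dense sets_Nested \<open>finite Pairs\<close>
    by (intro order.trans[OF measure_Un_le] add_mono measure_UNION_le sets.finite_UN) auto
  also have "\<dots> \<le> (\<Sum>i=1..m. exp (-2 * \<epsilon>\<^sup>2 / real n))
      + (\<Sum>ii'\<in>Pairs. exp (-2 * (p * (1 - p))\<^sup>2 * real n))"
    using prob_row_supp_large[OF N p] prob_row_supp_nested[OF N p] \<open>0 < n\<close> \<open>0 \<le> \<epsilon>\<close>
    by (intro add_mono sum_mono) (auto simp: Dense_def Nested_def Pairs_def)
  also have "\<dots> \<le> real m * exp (-2 * \<epsilon>\<^sup>2 / real n) + real m ^ 2 * exp (-2 * (p * (1 - p))\<^sup>2 * real n)"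
  proof -
    have "card Pairs \<le> card ({1..m} \<times> {1..m})"
      unfolding Pairs_def by (intro card_mono) auto
    then have "real (card Pairs) \<le> real m ^ 2"
      by (simp add: power2_eq_square flip: of_nat_mult)
    then show ?thesis
      by (simp add: mult_right_mono)
  qed
  finally show ?thesis
    unfolding Good_def .
qed

lemma measure_pair_measure_snd:
  assumes "prob_space A" "prob_space B" "S \<in> sets B"
  shows "measure (A \<Otimes>\<^sub>M B) {x \<in> space (A \<Otimes>\<^sub>M B). snd x \<in> S} = measure B S"
proof -
  interpret A: prob_space A by (rule assms(1))
  interpret B: prob_space B by (rule assms(2))
  have "{x \<in> space (A \<Otimes>\<^sub>M B). snd x \<in> S} = space A \<times> S"
    using sets.sets_into_space[OF assms(3)] by (auto simp: space_pair_measure)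
  moreover have "emeasure (A \<Otimes>\<^sub>M B) (space A \<times> S) = emeasure B S"
    using assms(3) by (simp add: B.emeasure_pair_measure_Times A.emeasure_space_1)
  ultimately show ?thesis
    by (simp add: measure_def)
qed

lemma prob_space_model: "0 < m \<Longrightarrow> prob_space (model \<theta> m n)"
  unfolding model_def iid_matrix_def
  by (intro prob_space_pair prob_space_PiM prob_space_normal_density prob_space_BG) simp

lemma prob_model_C1_C2_C3_failure_le:
  assumes "0 < \<theta>" "\<theta> < 1" "0 < m" "0 < n" "0 \<le> \<delta>" and m: "real m \<le> (1 - \<theta> - \<delta>) * real n"
  shows "1 - measure (model \<theta> m n) {DX \<in> space (model \<theta> m n).
             C1 m n (snd DX) \<and> C2 m n (snd DX) \<and> C3 m n (snd DX)}
         \<le> real n * exp (-2 * \<delta>\<^sup>2 * real n) + real n ^ 2 * exp (-2 * (\<theta> * (1 - \<theta>))\<^sup>2 * real n)"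
proof -
  let ?Good = "{X \<in> space (iid_matrix m n (BG \<theta>)). C1 m n X \<and> C2 m n X \<and> C3 m n X}"
  have "{DX \<in> space (model \<theta> m n). C1 m n (snd DX) \<and> C2 m n (snd DX) \<and> C3 m n (snd DX)}
      = {DX \<in> space (model \<theta> m n). snd DX \<in> ?Good}"
    by (auto simp: model_def space_pair_measure)
  also have "measure (model \<theta> m n) \<dots> = measure (iid_matrix m n (BG \<theta>)) ?Good"
    unfolding model_def using \<open>0 < m\<close>
    by (intro measure_pair_measure_snd prob_space_iid_matrix prob_space_BG prob_space_normal_density
        sets_iid_matrix_C1_C2_C3 sets_BG) simp
  also have "1 - \<dots> \<le> real m * exp (-2 * (\<delta> * real n)\<^sup>2 / real n)
      + real m ^ 2 * exp (-2 * (\<theta> * (1 - \<theta>))\<^sup>2 * real n)"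
    using assms by (intro prob_C1_C2_C3_failure_le prob_space_BG sets_BG measure_BG_nonzero)
      (auto simp: algebra_simps)
  also have "-2 * (\<delta> * real n)\<^sup>2 / real n = -2 * \<delta>\<^sup>2 * real n"
    using \<open>0 < n\<close> by (simp add: power2_eq_square)
  also have "real m * exp (-2 * \<delta>\<^sup>2 * real n) + real m ^ 2 * exp (-2 * (\<theta> * (1 - \<theta>))\<^sup>2 * real n)
      \<le> real n * exp (-2 * \<delta>\<^sup>2 * real n) + real n ^ 2 * exp (-2 * (\<theta> * (1 - \<theta>))\<^sup>2 * real n)"
  proof -
    have "(1 - \<theta> - \<delta>) * real n \<le> 1 * real n"
      using assms(1,5) by (intro mult_right_mono) auto
    then have "real m \<le> real n"
      using m by simp
    then show ?thesis
      by (intro add_mono mult_right_mono power_mono) auto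
  qed
  finally show ?thesis .
qed

lemma tendsto_poly_exp_decay:
  assumes "0 < a" "0 < b"
  shows "((\<lambda>x::real. x * exp (-a * x) + x\<^sup>2 * exp (-b * x)) \<longlongrightarrow> 0) at_top"
proof -
  have "((\<lambda>x::real. x * exp (-a * x)) \<longlongrightarrow> 0) at_top"
    and "((\<lambda>x::real. x\<^sup>2 * exp (-b * x)) \<longlongrightarrow> 0) at_top"
    using assms by real_asymp+
  from tendsto_add[OF this] show ?thesis
    by simp
qed

lemma eventually_le_mult_of_ratio_tendsto:
  fixes m n :: "nat \<Rightarrow> nat"
  assumes "\<And>k. 0 < n k" "0 < nbar" "(\<lambda>k. real (n k) / real (m k)) \<longlonglongrightarrow> nbar" "1 / nbar < c"
  obtains \<delta> where "0 < \<delta>" "eventually (\<lambda>k. real (m k) \<le> (c - \<delta>) * real (n k)) sequentially"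
proof
  define \<delta> where "\<delta> = (c - 1 / nbar) / 2"
  show "0 < \<delta>"
    using assms(4) by (simp add: \<delta>_def)
  have "(\<lambda>k. real (m k) / real (n k)) \<longlonglongrightarrow> 1 / nbar"
    using tendsto_inverse[OF assms(3)] assms(2) by (simp add: inverse_eq_divide)
  moreover have "1 / nbar < c - \<delta>"
    using assms(4) by (simp add: \<delta>_def field_simps)
  ultimately have "eventually (\<lambda>k. real (m k) / real (n k) < c - \<delta>) sequentially"
    by (intro order_tendstoD(2))
  then show "eventually (\<lambda>k. real (m k) \<le> (c - \<delta>) * real (n k)) sequentially"
    by (rule eventually_mono) (use assms(1) in \<open>auto simp: divide_less_eq mult.commute\<close>)
qed

theorem corollary1:
  fixes \<theta> nbar :: real and m n :: "nat \<Rightarrow> nat"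
  assumes "0 < \<theta>" "\<theta> < 1"
    and "\<And>k. 0 < m k" "\<And>k. 0 < n k"
    and "filterlim m at_top sequentially" "filterlim n at_top sequentially"
    and "0 < nbar"
    and "(\<lambda>k. real (n k) / real (m k)) \<longlonglongrightarrow> nbar"
    and "nbar > 1 / (1 - \<theta>)"
  shows "(\<lambda>k. measure (model \<theta> (m k) (n k))
            {DX \<in> space (model \<theta> (m k) (n k)).
               C1 (m k) (n k) (snd DX) \<and> C2 (m k) (n k) (snd DX) \<and> C3 (m k) (n k) (snd DX)})
         \<longlonglongrightarrow> 1"
proof -
  let ?P = "\<lambda>k. measure (model \<theta> (m k) (n k)) {DX \<in> space (model \<theta> (m k) (n k)).
               C1 (m k) (n k) (snd DX) \<and> C2 (m k) (n k) (snd DX) \<and> C3 (m k) (n k) (snd DX)}"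
  have "1 / nbar < 1 - \<theta>"
    using assms(1,2,7,9) by (simp add: field_simps)
  with assms(4,7,8) obtain \<delta> where "0 < \<delta>"
    and margin: "eventually (\<lambda>k. real (m k) \<le> (1 - \<theta> - \<delta>) * real (n k)) sequentially"
    by (rule eventually_le_mult_of_ratio_tendsto)
  from margin have bound: "eventually (\<lambda>k. 1 - ?P k \<le> real (n k) * exp (-2 * \<delta>\<^sup>2 * real (n k))
      + real (n k) ^ 2 * exp (-2 * (\<theta> * (1 - \<theta>))\<^sup>2 * real (n k))) sequentially"
    by (rule eventually_mono)
      (rule prob_model_C1_C2_C3_failure_le; use assms(1-4) \<open>0 < \<delta>\<close> in simp)
  have bound_limit: "(\<lambda>k. real (n k) * exp (-2 * \<delta>\<^sup>2 * real (n k))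
      + real (n k) ^ 2 * exp (-2 * (\<theta> * (1 - \<theta>))\<^sup>2 * real (n k))) \<longlonglongrightarrow> 0"
    using filterlim_compose[OF tendsto_poly_exp_decay
        filterlim_compose[OF filterlim_real_sequentially assms(6)],
        of "2 * \<delta>\<^sup>2" "2 * (\<theta> * (1 - \<theta>))\<^sup>2"] \<open>0 < \<delta>\<close> assms(1,2)
    by (simp add: o_def)
  have "0 \<le> 1 - ?P k" for k
    using prob_space.prob_le_1[OF prob_space_model[OF assms(3)]] by simp
  then have "(\<lambda>k. 1 - ?P k) \<longlonglongrightarrow> 0"
    by (intro tendsto_sandwich[OF always_eventually bound tendsto_const bound_limit]) simp
  from tendsto_diff[OF tendsto_const[of 1] this] show ?thesis
    by simp
qed

end
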